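(* Let $1\le s<t$ be integers and let $n$ be sufficiently large. If $G$ is a $K_{s,t}$-saturated $n$ by $n$ bipartite graph with minimum degree $\delta<t-1$, then $G$ has at least $(s+t-2)n-(t-1)(t-2)$ edges.
   Context: An $n$ by $n$ bipartite graph $G$ has two color classes $U,U'$ with $|U|=|U'|=n$. Such a $G$ is called $K_{s,t}$-saturated if $G$ contains no subgraph isomorphic to $K_{s,t}$ (with either side of $K_{s,t}$ lying in either class), but adding any missing edge $uu'$ with $u\in U$, $u'\in U'$ creates a subgraph isomorphic to $K_{s,t}$ (with either orientation). *)

theory Defs
  imports Main
begin

text \<open>An n by n bipartite graph: colour classes U = {0..<n} and U' = {0..<n}
  (two disjoint copies), edges E a subset of U \<times> U'; the pair (u,u') is the edge
  between u \<in> U and u' \<in> U'.\<close>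

definition bip_graph :: "nat \<Rightarrow> (nat \<times> nat) set \<Rightarrow> bool" where
  "bip_graph n E \<longleftrightarrow> E \<subseteq> {0..<n} \<times> {0..<n}"

definition contains_Kst :: "nat \<Rightarrow> nat \<Rightarrow> nat \<Rightarrow> (nat \<times> nat) set \<Rightarrow> bool" where
  "contains_Kst n s t E \<longleftrightarrow>
     (\<exists>A B. A \<subseteq> {0..<n} \<and> B \<subseteq> {0..<n} \<and> A \<times> B \<subseteq> E \<and>
        ((card A = s \<and> card B = t) \<or> (card A = t \<and> card B = s)))"

definition Kst_saturated :: "nat \<Rightarrow> nat \<Rightarrow> nat \<Rightarrow> (nat \<times> nat) set \<Rightarrow> bool" where
  "Kst_saturated n s t E \<longleftrightarrow> bip_graph n E \<and> \<not> contains_Kst n s t E \<and>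
     (\<forall>u\<in>{0..<n}. \<forall>u'\<in>{0..<n}. (u, u') \<notin> E \<longrightarrow> contains_Kst n s t (insert (u, u') E))"

definition deg_left :: "nat \<Rightarrow> (nat \<times> nat) set \<Rightarrow> nat \<Rightarrow> nat" where
  "deg_left n E u = card {u' \<in> {0..<n}. (u, u') \<in> E}"

definition deg_right :: "nat \<Rightarrow> (nat \<times> nat) set \<Rightarrow> nat \<Rightarrow> nat" where
  "deg_right n E u' = card {u \<in> {0..<n}. (u, u') \<in> E}"

definition min_degree :: "nat \<Rightarrow> (nat \<times> nat) set \<Rightarrow> nat" where
  "min_degree n E = Min (deg_left n E ` {0..<n} \<union> deg_right n E ` {0..<n})"

end

theory Submission
  imports Defs
begin

text \<open>Let \<open>v\<close> be a vertex of degree \<open>d < t - 1\<close>; by symmetry \<open>v \<in> U\<close>. For each of the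
  \<open>n - d\<close> non-neighbours \<open>u'\<close> of \<open>v\<close>, adding \<open>vu'\<close> creates a copy \<open>A \<times> B\<close> of \<open>K\<^sub>s\<^sub>,\<^sub>t\<close>
  with \<open>v \<in> A\<close>, \<open>u' \<in> B\<close>. As \<open>B - {u'}\<close> lies in the neighbourhood \<open>N(v)\<close>, \<open>|B| < t\<close>, so
  \<open>|B| = s\<close> and \<open>|A| = t\<close>: \<open>u'\<close> has \<open>t - 1\<close> neighbours in \<open>U\<close> with at least \<open>s - 1\<close>
  neighbours in \<open>N(v)\<close>. Call such vertices of \<open>U\<close> rich. Counting the edges from rich
  vertices to \<open>U' - N(v)\<close>, from rich vertices to \<open>N(v)\<close>, and from the other vertices
  (each of degree at least \<open>s - 1\<close>) gives
  \<open>|E| \<ge> (t - 1)(n - d) + (s - 1)n \<ge> (s + t - 2)n - (t - 1)(t - 2)\<close>.\<close>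

lemma card_Int_Times_eq_sum:
  assumes "finite A" "finite B"
  shows "card (E \<inter> (A \<times> B)) = (\<Sum>a\<in>A. card {b\<in>B. (a, b) \<in> E})"
proof -
  have "E \<inter> (A \<times> B) = Sigma A (\<lambda>a. {b\<in>B. (a, b) \<in> E})" by auto
  then show ?thesis using assms by (simp add: card_SigmaI)
qed

lemma card_Int_Times_ge_left:
  assumes "finite A" "finite B" and "\<And>a. a \<in> A \<Longrightarrow> k \<le> card {b\<in>B. (a, b) \<in> E}"
  shows "k * card A \<le> card (E \<inter> (A \<times> B))"
proof -
  have "k * card A = (\<Sum>a\<in>A. k)" by simp
  also have "\<dots> \<le> (\<Sum>a\<in>A. card {b\<in>B. (a, b) \<in> E})" using assms(3) by (rule sum_mono)
  also have "\<dots> = card (E \<inter> (A \<times> B))" using assms(1,2) by (simp add: card_Int_Times_eq_sum)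
  finally show ?thesis .
qed

lemma card_Int_Times_ge_right:
  assumes "finite A" "finite B" and "\<And>b. b \<in> B \<Longrightarrow> k \<le> card {a\<in>A. (a, b) \<in> E}"
  shows "k * card B \<le> card (E \<inter> (A \<times> B))"
proof -
  have "k * card B \<le> card (E\<inverse> \<inter> (B \<times> A))"
    using assms by (intro card_Int_Times_ge_left) auto
  also have "E\<inverse> \<inter> (B \<times> A) = (E \<inter> (A \<times> B))\<inverse>" by auto
  finally show ?thesis by simp
qed

definition nbhd_left :: "nat \<Rightarrow> (nat \<times> nat) set \<Rightarrow> nat \<Rightarrow> nat set" where
  "nbhd_left n E u = {u'\<in>{0..<n}. (u, u') \<in> E}"

lemma deg_left_eq_card_nbhd_left: "deg_left n E u = card (nbhd_left n E u)"
  unfolding deg_left_def nbhd_left_def ..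

lemma contains_Kst_converse [simp]: "contains_Kst n s t (E\<inverse>) \<longleftrightarrow> contains_Kst n s t E"
  unfolding contains_Kst_def by blast

lemma Kst_saturated_converse:
  assumes "Kst_saturated n s t E"
  shows "Kst_saturated n s t (E\<inverse>)"
proof -
  have "insert (u, u') (E\<inverse>) = (insert (u', u) E)\<inverse>" for u u' by auto
  then show ?thesis using assms unfolding Kst_saturated_def bip_graph_def by auto
qed

lemma deg_right_eq_deg_left_converse: "deg_right n E u' = deg_left n (E\<inverse>) u'"
  unfolding deg_right_def deg_left_def by simp

lemma min_degree_less_obtain:
  assumes "min_degree n E < k" and "0 < n"
  obtains v where "v < n" "deg_left n E v < k \<or> deg_right n E v < k"
proof -
  have "min_degree n E \<in> deg_left n E ` {0..<n} \<union> deg_right n E ` {0..<n}"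
    unfolding min_degree_def using \<open>0 < n\<close> by (intro Min_in) auto
  then show ?thesis using assms(1) that by auto
qed

lemma Kst_saturated_added_edge_in_copy:
  assumes sat: "Kst_saturated n s t E" and "u < n" "u' < n" "(u, u') \<notin> E"
  obtains A B where "A \<subseteq> {0..<n}" "B \<subseteq> {0..<n}" "u \<in> A" "u' \<in> B"
    "A \<times> B \<subseteq> insert (u, u') E" "(card A = s \<and> card B = t) \<or> (card A = t \<and> card B = s)"
proof -
  have "contains_Kst n s t (insert (u, u') E)"
    using assms unfolding Kst_saturated_def by simp
  then obtain A B where AB: "A \<subseteq> {0..<n}" "B \<subseteq> {0..<n}" "A \<times> B \<subseteq> insert (u, u') E"
    "(card A = s \<and> card B = t) \<or> (card A = t \<and> card B = s)"
    unfolding contains_Kst_def by blast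
  have "\<not> A \<times> B \<subseteq> E"
  proof
    assume "A \<times> B \<subseteq> E"
    then have "contains_Kst n s t E" using AB unfolding contains_Kst_def by blast
    then show False using sat unfolding Kst_saturated_def by simp
  qed
  then have "(u, u') \<in> A \<times> B" using AB(3) by blast
  then show ?thesis using that[OF AB(1,2) _ _ AB(3,4)] by blast
qed

lemma Kst_saturated_deg_left_ge:
  assumes sat: "Kst_saturated n s t E" and "s \<le> t" "s \<le> n" "w < n"
  shows "s - 1 \<le> deg_left n E w"
proof (cases "\<forall>y<n. (w, y) \<in> E")
  case True
  then have "{y\<in>{0..<n}. (w, y) \<in> E} = {0..<n}" by auto
  then show ?thesis using \<open>s \<le> n\<close> unfolding deg_left_def by simp
next
  case False
  then obtain y where "y < n" "(w, y) \<notin> E" by auto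
  with assms obtain A B where AB: "B \<subseteq> {0..<n}" "w \<in> A" "y \<in> B"
    "A \<times> B \<subseteq> insert (w, y) E" "(card A = s \<and> card B = t) \<or> (card A = t \<and> card B = s)"
    by (elim Kst_saturated_added_edge_in_copy)
  have "finite B" using AB(1) finite_subset by blast
  have "s - 1 \<le> card (B - {y})" using AB \<open>finite B\<close> \<open>s \<le> t\<close> by auto
  also have "\<dots> \<le> deg_left n E w"
    unfolding deg_left_def using AB by (intro card_mono) auto
  finally show ?thesis .
qed

lemma Kst_saturated_nonneighbour_has_rich_neighbours:
  assumes sat: "Kst_saturated n s t E"
    and v: "v < n" "deg_left n E v < t - 1" and u': "u' < n" "(v, u') \<notin> E"
  shows "t - 1 \<le> card {w\<in>{0..<n}. (w, u') \<in> E \<and>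
                       s - 1 \<le> card (nbhd_left n E w \<inter> nbhd_left n E v)}"
proof -
  obtain A B where AB: "A \<subseteq> {0..<n}" "B \<subseteq> {0..<n}" "v \<in> A" "u' \<in> B"
    "A \<times> B \<subseteq> insert (v, u') E" "(card A = s \<and> card B = t) \<or> (card A = t \<and> card B = s)"
    using sat v(1) u' by (elim Kst_saturated_added_edge_in_copy)
  have fin: "finite A" "finite B" using AB(1,2) finite_subset by auto
  have B_nbhd: "B - {u'} \<subseteq> nbhd_left n E v"
    using AB unfolding nbhd_left_def by auto
  have "card B - 1 = card (B - {u'})" using fin AB(4) by simp
  also have "\<dots> \<le> deg_left n E v"
    unfolding deg_left_eq_card_nbhd_left using B_nbhd
    by (intro card_mono) (simp_all add: nbhd_left_def)
  finally have "card B - 1 \<le> deg_left n E v" .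
  then have "card B \<noteq> t" using v(2) by linarith
  then have cards: "card A = t" "card B = s" using AB(6) by auto
  have "A - {v} \<subseteq> {w\<in>{0..<n}. (w, u') \<in> E \<and>
                       s - 1 \<le> card (nbhd_left n E w \<inter> nbhd_left n E v)}"
  proof
    fix w assume w: "w \<in> A - {v}"
    have "B - {u'} \<subseteq> nbhd_left n E w \<inter> nbhd_left n E v"
      using B_nbhd w AB unfolding nbhd_left_def by auto
    then have "card (B - {u'}) \<le> card (nbhd_left n E w \<inter> nbhd_left n E v)"
      by (intro card_mono) (auto simp: nbhd_left_def)
    moreover have "card (B - {u'}) = s - 1" using cards fin(2) AB(4) by simp
    moreover have "(w, u') \<in> E" using w AB(4,5) by auto
    ultimately show "w \<in> {w\<in>{0..<n}. (w, u') \<in> E \<and>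
                   s - 1 \<le> card (nbhd_left n E w \<inter> nbhd_left n E v)}"
      using w AB(1) by auto
  qed
  then have "card (A - {v}) \<le> card {w\<in>{0..<n}. (w, u') \<in> E \<and>
                       s - 1 \<le> card (nbhd_left n E w \<inter> nbhd_left n E v)}"
    by (rule card_mono[rotated]) simp
  moreover have "card (A - {v}) = t - 1" using cards fin(1) AB(3) by simp
  ultimately show ?thesis by simp
qed

lemma Kst_saturated_card_ge_low_deg_left:
  assumes sat: "Kst_saturated n s t E" and "s \<le> t" "s \<le> n"
    and v: "v < n" "deg_left n E v < t - 1"
  shows "(t - 1) * (n - deg_left n E v) + (s - 1) * n \<le> card E"
proof -
  define U where "U = {0..<n}"
  define N where "N = nbhd_left n E v"
  define X where "X = U - N"
  define R where "R = {w\<in>U. s - 1 \<le> card (nbhd_left n E w \<inter> N)}"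
  have fin: "finite U" "finite N" "finite X" "finite R" "finite (U - R)"
    unfolding U_def N_def X_def R_def nbhd_left_def by auto
  have N_U: "N \<subseteq> U" and R_U: "R \<subseteq> U" unfolding N_def U_def R_def nbhd_left_def by auto
  have E_U: "E \<subseteq> U \<times> U" using sat unfolding Kst_saturated_def bip_graph_def U_def by auto
  have to_X: "(t - 1) * card X \<le> card (E \<inter> (R \<times> X))"
  proof (rule card_Int_Times_ge_right[OF fin(4,3)])
    fix u' assume "u' \<in> X"
    then have "u' < n" "(v, u') \<notin> E" unfolding X_def U_def N_def nbhd_left_def by auto
    then have "t - 1 \<le> card {w\<in>U. (w, u') \<in> E \<and> s - 1 \<le> card (nbhd_left n E w \<inter> N)}"
      using Kst_saturated_nonneighbour_has_rich_neighbours[OF sat v] unfolding U_def N_def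
      by blast
    also have "{w\<in>U. (w, u') \<in> E \<and> s - 1 \<le> card (nbhd_left n E w \<inter> N)} = {w\<in>R. (w, u') \<in> E}"
      unfolding R_def by auto
    finally show "t - 1 \<le> card {w\<in>R. (w, u') \<in> E}" .
  qed
  have from_R: "(s - 1) * card R \<le> card (E \<inter> (R \<times> N))"
  proof (rule card_Int_Times_ge_left[OF fin(4,2)])
    fix w assume "w \<in> R"
    moreover have "nbhd_left n E w \<inter> N = {y\<in>N. (w, y) \<in> E}"
      unfolding N_def nbhd_left_def by auto
    ultimately show "s - 1 \<le> card {y\<in>N. (w, y) \<in> E}" unfolding R_def by auto
  qed
  have from_poor: "(s - 1) * card (U - R) \<le> card (E \<inter> ((U - R) \<times> U))"
  proof (rule card_Int_Times_ge_left[OF fin(5,1)])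
    fix w assume "w \<in> U - R"
    then have "s - 1 \<le> deg_left n E w"
      using Kst_saturated_deg_left_ge[OF sat \<open>s \<le> t\<close> \<open>s \<le> n\<close>] unfolding U_def by auto
    then show "s - 1 \<le> card {y\<in>U. (w, y) \<in> E}" unfolding deg_left_def U_def .
  qed
  have disjoint: "E \<inter> (R \<times> X) \<inter> E \<inter> (R \<times> N) = {}"
    "(E \<inter> (R \<times> X) \<union> E \<inter> (R \<times> N)) \<inter> E \<inter> ((U - R) \<times> U) = {}"
    unfolding X_def by auto
  have "card (E \<inter> (R \<times> X)) + card (E \<inter> (R \<times> N)) + card (E \<inter> ((U - R) \<times> U))
      = card (E \<inter> (R \<times> X) \<union> E \<inter> (R \<times> N) \<union> E \<inter> ((U - R) \<times> U))"
    using fin disjoint by (simp add: card_Un_disjoint Int_assoc)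
  also have "\<dots> \<le> card E"
    using E_U fin by (intro card_mono) (simp_all add: finite_subset)
  finally have "(t - 1) * card X + (s - 1) * (card R + card (U - R)) \<le> card E"
    using to_X from_R from_poor by (simp add: add_mult_distrib2)
  moreover have "card X = n - deg_left n E v"
    unfolding X_def deg_left_eq_card_nbhd_left N_def[symmetric] using N_U fin
    by (simp add: card_Diff_subset U_def)
  moreover have "card R + card (U - R) = n"
    using R_U fin card_mono[OF fin(1) R_U] by (simp add: card_Diff_subset U_def)
  ultimately show ?thesis by simp
qed

theorem proposition2p1:
  fixes s t :: nat
  assumes "1 \<le> s" and "s < t"
  shows "\<exists>N. \<forall>n \<ge> N. \<forall>E. Kst_saturated n s t E \<and> min_degree n E < t - 1 \<longrightarrow>
           int (card E) \<ge> int (s + t - 2) * int n - int (t - 1) * int (t - 2)"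
proof (intro exI allI impI)
  fix n :: nat and E
  assume "t \<le> n" and "Kst_saturated n s t E \<and> min_degree n E < t - 1"
  then have sat: "Kst_saturated n s t E" and "min_degree n E < t - 1" by auto
  then obtain v where v: "v < n" "deg_left n E v < t - 1 \<or> deg_left n (E\<inverse>) v < t - 1"
    using \<open>s < t\<close> \<open>t \<le> n\<close>
    by (auto elim: min_degree_less_obtain simp: deg_right_eq_deg_left_converse)
  have bound: "(t - 1) * (n - (t - 2)) + (s - 1) * n \<le> card F"
    if "Kst_saturated n s t F" "deg_left n F v < t - 1" for F
  proof -
    have "(t - 1) * (n - (t - 2)) \<le> (t - 1) * (n - deg_left n F v)"
      using that(2) by (intro mult_left_mono) auto
    also have "\<dots> + (s - 1) * n \<le> card F"
      using Kst_saturated_card_ge_low_deg_left[OF that(1)] that(2) assms \<open>t \<le> n\<close> v(1)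
      by simp
    finally show ?thesis by simp
  qed
  have "(t - 1) * (n - (t - 2)) + (s - 1) * n \<le> card E"
    using v(2) bound[OF sat] bound[OF Kst_saturated_converse[OF sat]] by auto
  then have "int ((t - 1) * (n - (t - 2)) + (s - 1) * n) \<le> int (card E)"
    by (simp only: of_nat_le_iff)
  moreover have "int ((t - 1) * (n - (t - 2)) + (s - 1) * n)
      = int (t - 1) * (int n - int (t - 2)) + int (s - 1) * int n"
    using \<open>t \<le> n\<close> by (simp add: of_nat_diff)
  moreover have "int (s + t - 2) = int (t - 1) + int (s - 1)"
    using assms by simp
  ultimately show "int (card E) \<ge> int (s + t - 2) * int n - int (t - 1) * int (t - 2)"
    by (simp only: algebra_simps)
qed

end
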